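(* Let $\alpha$ be a graph function on a strongly connected digraph $G$. There is a real number $b>-\infty$ such that no finite sequence of balancing operations applied starting from $\alpha$ can produce a graph function having an edge of weight less than $b$.
   Context: $G$ is a strongly connected directed graph (self-loops allowed); a graph function assigns a real weight $\alpha_{uv}$ to each edge. $\alpha_v^{\text{in}}=\max_{u:(u,v)\in G}\alpha_{uv}$, $\alpha_v^{\text{out}}=\max_{w:(v,w)\in G}\alpha_{vw}$. The balancing operation at a vertex $v$ adds $(\alpha_v^{\text{out}}-\alpha_v^{\text{in}})/2$ to each edge weight $\alpha_{uv}$ with $u\ne v$, subtracts the same amount from each $\alpha_{vw}$ with $w\ne v$, and leaves a self-loop at $v$ unchanged. *)

theory Defs
  imports Complex_Main
begin

definition strongly_connected :: "'v set \<Rightarrow> ('v \<times> 'v) set \<Rightarrow> bool" where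
  "strongly_connected V E \<longleftrightarrow> finite V \<and> V \<noteq> {} \<and> E \<subseteq> V \<times> V \<and>
     (\<forall>u\<in>V. \<forall>v\<in>V. (u, v) \<in> E\<^sup>+)"

text \<open>A graph function: a real weight for each edge (values off E are irrelevant).\<close>
type_synonym 'v graph_fun = "'v \<Rightarrow> 'v \<Rightarrow> real"

definition alpha_in :: "('v \<times> 'v) set \<Rightarrow> 'v graph_fun \<Rightarrow> 'v \<Rightarrow> real" where
  "alpha_in E \<alpha> v = Max {\<alpha> u v | u. (u, v) \<in> E}"

definition alpha_out :: "('v \<times> 'v) set \<Rightarrow> 'v graph_fun \<Rightarrow> 'v \<Rightarrow> real" where
  "alpha_out E \<alpha> v = Max {\<alpha> v w | w. (v, w) \<in> E}"

definition balance :: "('v \<times> 'v) set \<Rightarrow> 'v graph_fun \<Rightarrow> 'v \<Rightarrow> 'v graph_fun" where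
  "balance E \<alpha> v = (let d = (alpha_out E \<alpha> v - alpha_in E \<alpha> v) / 2 in
     (\<lambda>x y. if (x, y) \<in> E \<and> y = v \<and> x \<noteq> v then \<alpha> x y + d
            else if (x, y) \<in> E \<and> x = v \<and> y \<noteq> v then \<alpha> x y - d
            else \<alpha> x y))"

definition balance_seq :: "('v \<times> 'v) set \<Rightarrow> 'v graph_fun \<Rightarrow> 'v list \<Rightarrow> 'v graph_fun" where
  "balance_seq E \<alpha> vs = foldl (balance E) \<alpha> vs"

end

theory Submission
  imports Defs
begin

text \<open>Balancing at v only adds a constant to the potential of v, so every graph function
  reachable from \<open>\<alpha>\<close> has the form \<open>\<alpha> x y + \<phi> y - \<phi> x\<close>. Balancing also never raises
  the maximal edge weight M: the new weights on the in- and out-edges of v are at most the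
  average of the maximal in- and out-weights at v. For an edge (x, y), strong connectivity
  gives a path from y back to x; as long as all shifted weights stay below M, the potential
  can rise along that path only by a bounded amount, which bounds \<open>\<phi> x - \<phi> y\<close> and hence
  the weight of (x, y) from below.\<close>

lemma strongly_connected_finite_edges:
  "strongly_connected V E \<Longrightarrow> finite E"
  unfolding strongly_connected_def by (meson finite_SigmaI finite_subset)

lemma strongly_connected_in_out_edges:
  assumes "strongly_connected V E" "v \<in> V"
  obtains u w where "(u, v) \<in> E" "(v, w) \<in> E"
proof -
  have "(v, v) \<in> E\<^sup>+" using assms unfolding strongly_connected_def by blast
  then show thesis using that by (meson tranclD tranclD2)
qed

lemma balance_potential_shift:
  assumes "\<forall>(x, y)\<in>E. \<beta> x y = \<alpha> x y + \<phi> y - \<phi> x"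
  shows "\<exists>\<psi>. \<forall>(x, y)\<in>E. balance E \<beta> v x y = \<alpha> x y + \<psi> y - \<psi> x"
proof -
  define d where "d = (alpha_out E \<beta> v - alpha_in E \<beta> v) / 2"
  have "\<forall>(x, y)\<in>E. balance E \<beta> v x y = \<alpha> x y + (\<phi>(v := \<phi> v + d)) y - (\<phi>(v := \<phi> v + d)) x"
    using assms by (auto simp: balance_def d_def[symmetric] Let_def)
  then show ?thesis by blast
qed

lemma balance_seq_potential_shift:
  "\<exists>\<phi>. \<forall>(x, y)\<in>E. balance_seq E \<alpha> vs x y = \<alpha> x y + \<phi> y - \<phi> x"
proof (induction vs rule: rev_induct)
  case Nil
  show ?case by (rule exI[of _ "\<lambda>_. 0"]) (simp add: balance_seq_def)
next
  case (snoc v vs)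
  then obtain \<phi> where "\<forall>(x, y)\<in>E. balance_seq E \<alpha> vs x y = \<alpha> x y + \<phi> y - \<phi> x" ..
  then show ?case using balance_potential_shift by (simp add: balance_seq_def)
qed

lemma finite_in_weights: "finite E \<Longrightarrow> finite {\<alpha> u v | u. (u, v) \<in> E}"
proof -
  assume "finite E"
  moreover have "{\<alpha> u v | u. (u, v) \<in> E} = (\<lambda>(x, y). \<alpha> x y) ` (E \<inter> UNIV \<times> {v})" by force
  ultimately show ?thesis by simp
qed

lemma finite_out_weights: "finite E \<Longrightarrow> finite {\<alpha> v w | w. (v, w) \<in> E}"
proof -
  assume "finite E"
  moreover have "{\<alpha> v w | w. (v, w) \<in> E} = (\<lambda>(x, y). \<alpha> x y) ` (E \<inter> {v} \<times> UNIV)" by force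
  ultimately show ?thesis by simp
qed

lemma le_alpha_in: "finite E \<Longrightarrow> (u, v) \<in> E \<Longrightarrow> \<alpha> u v \<le> alpha_in E \<alpha> v"
  unfolding alpha_in_def by (rule Max_ge) (auto simp: finite_in_weights)

lemma le_alpha_out: "finite E \<Longrightarrow> (v, w) \<in> E \<Longrightarrow> \<alpha> v w \<le> alpha_out E \<alpha> v"
  unfolding alpha_out_def by (rule Max_ge) (auto simp: finite_out_weights)

lemma alpha_in_le:
  assumes "finite E" "(u, v) \<in> E" "\<forall>(x, y)\<in>E. \<alpha> x y \<le> M"
  shows "alpha_in E \<alpha> v \<le> M"
  unfolding alpha_in_def using assms by (subst Max_le_iff) (auto simp: finite_in_weights)

lemma alpha_out_le:
  assumes "finite E" "(v, w) \<in> E" "\<forall>(x, y)\<in>E. \<alpha> x y \<le> M"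
  shows "alpha_out E \<alpha> v \<le> M"
  unfolding alpha_out_def using assms by (subst Max_le_iff) (auto simp: finite_out_weights)

lemma edge_weight_le_Max:
  "finite E \<Longrightarrow> (x, y) \<in> E \<Longrightarrow> \<alpha> x y \<le> (MAX (x, y)\<in>E. \<alpha> x y)"
  by (rule Max_ge) (auto intro: rev_image_eqI)

lemma balance_le_max:
  assumes fin: "finite E" and u: "(u, v) \<in> E" and w: "(v, w) \<in> E"
    and le: "\<forall>(x, y)\<in>E. \<alpha> x y \<le> M"
  shows "\<forall>(x, y)\<in>E. balance E \<alpha> v x y \<le> M"
proof clarify
  fix x y assume xy: "(x, y) \<in> E"
  define i where "i = alpha_in E \<alpha> v"
  define out where "out = alpha_out E \<alpha> v"
  have "i \<le> M" "out \<le> M"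
    unfolding i_def out_def using alpha_in_le[OF fin u le] alpha_out_le[OF fin w le] .
  moreover have "\<alpha> x y \<le> i" if "y = v" using le_alpha_in[OF fin] xy that unfolding i_def by blast
  moreover have "\<alpha> x y \<le> out" if "x = v" using le_alpha_out[OF fin] xy that unfolding out_def by blast
  moreover have "balance E \<alpha> v x y = (if y = v \<and> x \<noteq> v then \<alpha> x y + (out - i) / 2
      else if x = v \<and> y \<noteq> v then \<alpha> x y - (out - i) / 2 else \<alpha> x y)"
    using xy unfolding balance_def Let_def i_def out_def by auto
  ultimately show "balance E \<alpha> v x y \<le> M" using le xy by (auto simp: field_simps)
qed

lemma balance_seq_le_max:
  assumes sc: "strongly_connected V E" and le: "\<forall>(x, y)\<in>E. \<alpha> x y \<le> M"
    and vs: "set vs \<subseteq> V"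
  shows "\<forall>(x, y)\<in>E. balance_seq E \<alpha> vs x y \<le> M"
  using vs
proof (induction vs rule: rev_induct)
  case Nil
  then show ?case using le by (simp add: balance_seq_def)
next
  case (snoc v vs)
  then obtain u w where "(u, v) \<in> E" "(v, w) \<in> E"
    using strongly_connected_in_out_edges[OF sc, of v] by auto
  with snoc balance_le_max[OF strongly_connected_finite_edges[OF sc]] show ?case
    by (simp add: balance_seq_def)
qed

lemma trancl_potential_rise_bounded:
  assumes "(a, b) \<in> E\<^sup>+"
  shows "\<exists>c. \<forall>\<phi> :: 'v \<Rightarrow> real. (\<forall>(x, y)\<in>E. \<alpha> x y + \<phi> y - \<phi> x \<le> M) \<longrightarrow> \<phi> b - \<phi> a \<le> c"
  using assms
proof (induction rule: trancl_induct)
  case (base y)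
  then show ?case by (intro exI[of _ "M - \<alpha> a y"]) fastforce
next
  case (step y z)
  then obtain c where
    "\<forall>\<phi> :: 'v \<Rightarrow> real. (\<forall>(x, y)\<in>E. \<alpha> x y + \<phi> y - \<phi> x \<le> M) \<longrightarrow> \<phi> y - \<phi> a \<le> c"
    by blast
  with step(2) show ?case by (intro exI[of _ "c + (M - \<alpha> y z)"]) fastforce
qed

lemma finite_uniform_lower_bound:
  fixes f :: "'a \<Rightarrow> 'b \<Rightarrow> real"
  assumes "finite A" "\<forall>e\<in>A. \<exists>c. \<forall>s. P s \<longrightarrow> c \<le> f s e"
  shows "\<exists>b. \<forall>s. P s \<longrightarrow> (\<forall>e\<in>A. b \<le> f s e)"
  using assms
proof (induction A rule: finite_induct)
  case empty
  then show ?case by auto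
next
  case (insert a A)
  then obtain b c where "\<forall>s. P s \<longrightarrow> (\<forall>e\<in>A. b \<le> f s e)" "\<forall>s. P s \<longrightarrow> c \<le> f s a"
    by auto
  then show ?case by (intro exI[of _ "min b c"]) fastforce
qed

lemma balance_seq_edge_lower_bound:
  assumes sc: "strongly_connected V E" and xy: "(x, y) \<in> E"
  shows "\<exists>c. \<forall>vs. set vs \<subseteq> V \<longrightarrow> c \<le> balance_seq E \<alpha> vs x y"
proof -
  define M where "M = (MAX (x, y)\<in>E. \<alpha> x y)"
  have le: "\<forall>(x, y)\<in>E. \<alpha> x y \<le> M"
    unfolding M_def using edge_weight_le_Max[OF strongly_connected_finite_edges[OF sc]] by blast
  have "(y, x) \<in> E\<^sup>+" using sc xy unfolding strongly_connected_def by blast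
  from trancl_potential_rise_bounded[OF this, of \<alpha> M] obtain c
    where c: "\<forall>\<phi>. (\<forall>(x, y)\<in>E. \<alpha> x y + \<phi> y - \<phi> x \<le> M) \<longrightarrow> \<phi> x - \<phi> y \<le> c"
    by blast
  have "\<alpha> x y - c \<le> balance_seq E \<alpha> vs x y" if "set vs \<subseteq> V" for vs
  proof -
    obtain \<phi> where \<phi>: "\<forall>(x, y)\<in>E. balance_seq E \<alpha> vs x y = \<alpha> x y + \<phi> y - \<phi> x"
      using balance_seq_potential_shift[of E \<alpha> vs] by blast
    have "\<forall>(x, y)\<in>E. \<alpha> x y + \<phi> y - \<phi> x \<le> M"
      using balance_seq_le_max[OF sc le that] \<phi> by fastforce
    with c have "\<phi> x - \<phi> y \<le> c" by blast
    with \<phi> xy show ?thesis by auto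
  qed
  then show ?thesis by blast
qed

theorem lemma9:
  fixes V :: "'v set" and E :: "('v \<times> 'v) set" and \<alpha> :: "'v \<Rightarrow> 'v \<Rightarrow> real"
  assumes "strongly_connected V E"
  shows "\<exists>b::real. \<forall>vs. set vs \<subseteq> V \<longrightarrow>
           (\<forall>(x, y)\<in>E. b \<le> balance_seq E \<alpha> vs x y)"
proof -
  have "\<forall>e\<in>E. \<exists>c. \<forall>vs. set vs \<subseteq> V \<longrightarrow> c \<le> balance_seq E \<alpha> vs (fst e) (snd e)"
    using balance_seq_edge_lower_bound[OF assms] by auto
  from finite_uniform_lower_bound[OF strongly_connected_finite_edges[OF assms] this] obtain b
    where "\<forall>vs. set vs \<subseteq> V \<longrightarrow> (\<forall>e\<in>E. b \<le> balance_seq E \<alpha> vs (fst e) (snd e))"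
    by blast
  then show ?thesis by fastforce
qed

end
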